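(* Let $\alpha_a$ be a labeled dGL hybrid game, $S$ an Angelic subvalue map for $\alpha_a$ and $\varphi$ a formula compatible with $S$ (i.e. $\models S(\mathsf{end})\rightarrow\varphi$). Then every state satisfying $\langle\alpha\rangle\varphi$ satisfies $\langle\mathcal{U}(\alpha_a,S)\rangle\varphi$.
   Context: Differential game logic (dGL). Hybrid games are generated by $\alpha,\beta ::= x:=e \mid \alpha;\beta \mid ?Q \mid \{x'=f(x)\,\&\,Q\} \mid \alpha^{*} \mid \alpha\cup\beta \mid x:=* \mid\ !Q \mid \{x'=f(x)\,\&\,Q\}^{d} \mid \alpha^{\times} \mid \alpha\cap\beta \mid x:=\otimes$, with $x$ a real variable (vector for ODEs), $e,f(x)$ polynomial terms, $Q$ a formula. Players Angel and Demon: $x:=e$ deterministic assignment; in $x:=*$ Angel (in $x:=\otimes$ Demon) assigns any real; in $\{x'=f(x)\&Q\}$ Angel (in $\{\cdot\}^d$ Demon) chooses a duration $r\ge 0$ of following the ODE with $Q$ true throughout; $?Q$ makes Angel lose and $!Q$ makes Demon lose if $Q$ is false; in $\alpha\cup\beta$ Angel (in $\alpha\cap\beta$ Demon) chooses the branch; in $\alpha^*$ Angel (in $\alpha^\times$ Demon) decides before each iteration whether to repeat or stop; $\alpha;\beta$ sequential. Formulas: polynomial (in)equalities closed under connectives, real quantifiers, and modalities $\langle\alpha\rangle\varphi$ (Angel can win $\alpha$ reaching $\varphi$) and $[\alpha]\varphi\equiv\neg\langle\alpha\rangle\neg\varphi$, with the standard dGL winning-region semantics ($\langle x:=*\rangle\varphi\leftrightarrow\exists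 x\varphi$, $\langle x:=\otimes\rangle\varphi\leftrightarrow\forall x\varphi$, $\langle ?Q\rangle\varphi\leftrightarrow Q\wedge\varphi$, $\langle !Q\rangle\varphi\leftrightarrow(Q\rightarrow\varphi)$, $\cup$ as disjunction, $\cap$ as conjunction, $\langle\alpha;\beta\rangle\varphi\leftrightarrow\langle\alpha\rangle\langle\beta\rangle\varphi$, Angel ODE existential, Demon ODE universal over durations/solutions staying in $Q$, $\langle\alpha^*\rangle$ least and $\langle\alpha^\times\rangle$ greatest fixed point). $\models$ denotes validity. Labels: every node of the syntax tree carries a unique label; $\alpha_a$ has root label $a$; $\mathrm{nodes}(\alpha_a)$ is its set of subgame labels; $\mathsf{end}$ is a special extra label. A map $S$ assigns formulas to a label set containing $\mathrm{nodes}(\alpha_a)\cup\{\mathsf{end}\}$; $S\{\mathsf{end}\mapsto Q\}$ replaces the value at $\mathsf{end}$. $\gamma_g,\delta_d$ denote immediate subgames with root labels $g,d$. Game suffix: $\mathrm{suffix}_a(\alpha_a)=\alpha_a$; for $b\ne a$: for loops $((\gamma_g)^* )_a,((\gamma_g)^\times)_a$ it is $\mathrm{suffix}_b(\gamma_g);\alpha_a$; for $\cup,\cap$ the suffix within the branch containing $b$; for $(\gamma_g;\delta_d)_a$ it is $\mathrm{suffix}_b(\gamma_g);\delta_d$ if $b\in\mathrm{nodes}(\gamma_g)$ else $\mathrm{suffix}_b(\delta_d)$. An Angelic subvalue map for $\alpha_a$ is a map $S$ with $\models S(b)\rightarrow\langle\mathrm{suffix}_b(\alpha_a)\rangle S(\mathsf{end})$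 for all $b\in\mathrm{nodes}(\alpha_a)$. Universal projection $\mathcal{U}(\alpha_a,S)$: $(x:=* )_a\mapsto (x:=\otimes)_a;\,!S(\mathsf{end})$; $\{x'=f(x)\&Q\}_a\mapsto(\{x'=f(x)\&Q\}^d)_a;\,!S(\mathsf{end})$; $(\gamma_g\cup\delta_d)_a\mapsto(!S(g);\mathcal{U}(\gamma_g,S))\cap(!S(d);\mathcal{U}(\delta_d,S))$; $((\gamma_g)^* )_a\mapsto(!S(g);\mathcal{U}(\gamma_g,S\{\mathsf{end}\mapsto S(a)\}))^{\times};\,!S(\mathsf{end})$; $(\gamma_g;\delta_d)_a\mapsto\mathcal{U}(\gamma_g,S\{\mathsf{end}\mapsto S(d)\});\mathcal{U}(\delta_d,S)$; $(\gamma_g\cap\delta_d)_a\mapsto\mathcal{U}(\gamma_g,S)\cap\mathcal{U}(\delta_d,S)$; $((\gamma_g)^\times)_a\mapsto\mathcal{U}(\gamma_g,S\{\mathsf{end}\mapsto S(a)\})^\times$; $x:=e,x:=\otimes,?Q,!Q,\{x'=f(x)\&Q\}^d$ unchanged (labels preserved, new nodes fresh labels). *)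

theory Defs
  imports Complex_Main
begin

type_synonym var = nat
type_synonym state = "var \<Rightarrow> real"

text \<open>Original labels are arbitrary; labels of nodes newly created by the
  universal projection (or by the game suffix) are built from the label of the node
  being processed, which keeps them fresh.\<close>
datatype lab = Lab nat | Fresh lab nat

datatype key = Nd lab | End

datatype trm = Var var | Const real | Plus trm trm | Times trm trm | Neg trm

primrec trm_sem :: "trm \<Rightarrow> state \<Rightarrow> real" where
  "trm_sem (Var x) \<omega> = \<omega> x"
| "trm_sem (Const c) \<omega> = c"
| "trm_sem (Plus s t) \<omega> = trm_sem s \<omega> + trm_sem t \<omega>"
| "trm_sem (Times s t) \<omega> = trm_sem s \<omega> * trm_sem t \<omega>"
| "trm_sem (Neg s) \<omega> = - trm_sem s \<omega>"

text \<open>Formulas and (labelled) hybrid games; every game node carries a label.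
  An ODE is given as a list of pairs (x, f(x)) meaning x' = f(x).\<close>
datatype fml =
    Geq trm trm | Gt trm trm | Eq trm trm
  | Not fml | And fml fml | Or fml fml | Imp fml fml
  | Exists var fml | Forall var fml
  | Dia game fml | Box game fml
and game =
    Asgn lab var trm
  | AngelAny lab var
  | DemonAny lab var
  | Test lab fml
  | DTest lab fml
  | ODE lab "(var \<times> trm) list" fml
  | DODE lab "(var \<times> trm) list" fml
  | Seq lab game game
  | Choice lab game game
  | DChoice lab game game
  | Star lab game
  | Cross lab game

definition ode_sol :: "(var \<times> trm) list \<Rightarrow> state \<Rightarrow> real \<Rightarrow> (real \<Rightarrow> state) \<Rightarrow> bool" where
  "ode_sol xs \<omega> r \<phi> \<longleftrightarrow> 0 \<le> r \<and> \<phi> 0 = \<omega> \<and>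
     (\<forall>t\<in>{0..r}. \<forall>y. y \<notin> fst ` set xs \<longrightarrow> \<phi> t y = \<omega> y) \<and>
     (\<forall>t\<in>{0..r}. \<forall>(x, f)\<in>set xs.
        ((\<lambda>s. \<phi> s x) has_real_derivative trm_sem f (\<phi> t)) (at t within {0..r}))"

primrec fml_sem :: "fml \<Rightarrow> state set"
and game_sem :: "game \<Rightarrow> state set \<Rightarrow> state set" where
  "fml_sem (Geq s t) = {\<omega>. trm_sem s \<omega> \<ge> trm_sem t \<omega>}"
| "fml_sem (Gt s t) = {\<omega>. trm_sem s \<omega> > trm_sem t \<omega>}"
| "fml_sem (Eq s t) = {\<omega>. trm_sem s \<omega> = trm_sem t \<omega>}"
| "fml_sem (Not p) = - fml_sem p"
| "fml_sem (And p q) = fml_sem p \<inter> fml_sem q"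
| "fml_sem (Or p q) = fml_sem p \<union> fml_sem q"
| "fml_sem (Imp p q) = - fml_sem p \<union> fml_sem q"
| "fml_sem (Exists x p) = {\<omega>. \<exists>v. \<omega>(x := v) \<in> fml_sem p}"
| "fml_sem (Forall x p) = {\<omega>. \<forall>v. \<omega>(x := v) \<in> fml_sem p}"
| "fml_sem (Dia g p) = game_sem g (fml_sem p)"
| "fml_sem (Box g p) = - game_sem g (- fml_sem p)"
| "game_sem (Asgn l x e) X = {\<omega>. \<omega>(x := trm_sem e \<omega>) \<in> X}"
| "game_sem (AngelAny l x) X = {\<omega>. \<exists>v. \<omega>(x := v) \<in> X}"
| "game_sem (DemonAny l x) X = {\<omega>. \<forall>v. \<omega>(x := v) \<in> X}"
| "game_sem (Test l q) X = fml_sem q \<inter> X"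
| "game_sem (DTest l q) X = - fml_sem q \<union> X"
| "game_sem (ODE l xs q) X = {\<omega>. \<exists>r \<phi>. ode_sol xs \<omega> r \<phi> \<and>
      (\<forall>t\<in>{0..r}. \<phi> t \<in> fml_sem q) \<and> \<phi> r \<in> X}"
| "game_sem (DODE l xs q) X = {\<omega>. \<forall>r \<phi>. ode_sol xs \<omega> r \<phi> \<and>
      (\<forall>t\<in>{0..r}. \<phi> t \<in> fml_sem q) \<longrightarrow> \<phi> r \<in> X}"
| "game_sem (Seq l g h) X = game_sem g (game_sem h X)"
| "game_sem (Choice l g h) X = game_sem g X \<union> game_sem h X"
| "game_sem (DChoice l g h) X = game_sem g X \<inter> game_sem h X"
| "game_sem (Star l g) X = lfp (\<lambda>Z. X \<union> game_sem g Z)"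
| "game_sem (Cross l g) X = gfp (\<lambda>Z. X \<inter> game_sem g Z)"

definition valid :: "fml \<Rightarrow> bool" where
  "valid p \<longleftrightarrow> (\<forall>\<omega>. \<omega> \<in> fml_sem p)"

fun root :: "game \<Rightarrow> lab" where
  "root (Asgn l _ _) = l" | "root (AngelAny l _) = l" | "root (DemonAny l _) = l"
| "root (Test l _) = l" | "root (DTest l _) = l" | "root (ODE l _ _) = l"
| "root (DODE l _ _) = l" | "root (Seq l _ _) = l" | "root (Choice l _ _) = l"
| "root (DChoice l _ _) = l" | "root (Star l _) = l" | "root (Cross l _) = l"

text \<open>List of labels of all subgame nodes (subgames only, not games nested in formulas).\<close>
fun labels :: "game \<Rightarrow> lab list" where
  "labels (Seq l g h) = l # labels g @ labels h"
| "labels (Choice l g h) = l # labels g @ labels h"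
| "labels (DChoice l g h) = l # labels g @ labels h"
| "labels (Star l g) = l # labels g"
| "labels (Cross l g) = l # labels g"
| "labels g = [root g]"

definition nodes :: "game \<Rightarrow> lab set" where
  "nodes g = set (labels g)"

text \<open>Game suffix suffix_b(\<alpha>_a) (only meaningful for b \<in> nodes \<alpha>_a).\<close>
fun suffix :: "lab \<Rightarrow> game \<Rightarrow> game" where
  "suffix b (Star a g) = (if b = a then Star a g else Seq (Fresh a 0) (suffix b g) (Star a g))"
| "suffix b (Cross a g) = (if b = a then Cross a g else Seq (Fresh a 0) (suffix b g) (Cross a g))"
| "suffix b (Choice a g h) = (if b = a then Choice a g h
     else if b \<in> set (labels g) then suffix b g else suffix b h)"
| "suffix b (DChoice a g h) = (if b = a then DChoice a g h
     else if b \<in> set (labels g) then suffix b g else suffix b h)"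
| "suffix b (Seq a g h) = (if b = a then Seq a g h
     else if b \<in> set (labels g) then Seq (Fresh a 0) (suffix b g) h else suffix b h)"
| "suffix b g = g"

definition angelic_subvalue :: "game \<Rightarrow> (key \<Rightarrow> fml) \<Rightarrow> bool" where
  "angelic_subvalue \<alpha> S \<longleftrightarrow>
     (\<forall>b\<in>nodes \<alpha>. valid (Imp (S (Nd b)) (Dia (suffix b \<alpha>) (S End))))"

fun uproj :: "game \<Rightarrow> (key \<Rightarrow> fml) \<Rightarrow> game" where
  "uproj (AngelAny a x) S = Seq (Fresh a 0) (DemonAny a x) (DTest (Fresh a 1) (S End))"
| "uproj (ODE a xs q) S = Seq (Fresh a 0) (DODE a xs q) (DTest (Fresh a 1) (S End))"
| "uproj (Choice a g h) S =
     DChoice a (Seq (Fresh a 0) (DTest (Fresh a 1) (S (Nd (root g)))) (uproj g S))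
               (Seq (Fresh a 2) (DTest (Fresh a 3) (S (Nd (root h)))) (uproj h S))"
| "uproj (Star a g) S =
     Seq (Fresh a 0)
       (Cross a (Seq (Fresh a 1) (DTest (Fresh a 2) (S (Nd (root g))))
                   (uproj g (S(End := S (Nd a))))))
       (DTest (Fresh a 3) (S End))"
| "uproj (Seq a g h) S = Seq a (uproj g (S(End := S (Nd (root h))))) (uproj h S)"
| "uproj (DChoice a g h) S = DChoice a (uproj g S) (uproj h S)"
| "uproj (Cross a g) S = Cross a (uproj g (S(End := S (Nd a))))"
| "uproj g S = g"

end

theory Submission
  imports Defs
begin

text \<open>The projection turns Angel's choices into Demon's and guards them by Demon tests
  \<open>!S(b)\<close>. Such a test costs Angel nothing: wherever \<open>S(b)\<close> holds, the subvalue
  property says she can still win the remainder of the original game from node \<open>b\<close>.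
  The proof is an induction on the game, for an arbitrary postcondition set \<open>P \<supseteq> S(end)\<close>
  and the subvalue property read semantically relative to \<open>P\<close>. The projection of an
  Angelic loop is even won everywhere, since Demon must pass \<open>!S(g)\<close> before each
  iteration; for a Demonic loop the original winning region is a post-fixpoint of the
  projected loop.\<close>

lemma game_sem_mono: "X \<subseteq> Y \<Longrightarrow> game_sem g X \<subseteq> game_sem g Y"
proof (induction g arbitrary: X Y rule: game.induct[of "\<lambda>_. True"])
  case (Seq l g h)
  then show ?case by (metis game_sem.simps(8))
next
  case (Choice l g h)
  then show ?case by (metis game_sem.simps(9) Un_mono)
next
  case (DChoice l g h)
  then show ?case by (metis game_sem.simps(10) Int_mono)
next
  case (Star l g)
  then show ?case by (auto intro!: lfp_mono)
next
  case (Cross l g)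
  then show ?case by (auto intro!: gfp_mono)
qed auto

lemma root_in_nodes: "root g \<in> nodes g"
  by (cases g) (auto simp: nodes_def)

lemma suffix_root: "suffix (root g) g = g"
  by (cases g) auto

definition sem_subvalue :: "game \<Rightarrow> (key \<Rightarrow> fml) \<Rightarrow> state set \<Rightarrow> bool" where
  "sem_subvalue g S P \<longleftrightarrow> (\<forall>b\<in>nodes g. fml_sem (S (Nd b)) \<subseteq> game_sem (suffix b g) P)"

lemma angelic_subvalue_iff_sem_subvalue:
  "angelic_subvalue g S \<longleftrightarrow> sem_subvalue g S (fml_sem (S End))"
  by (auto simp: angelic_subvalue_def sem_subvalue_def valid_def)

lemma sem_subvalue_upd_End [simp]: "sem_subvalue g (S(End := q)) P = sem_subvalue g S P"
  by (simp add: sem_subvalue_def)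

lemma sem_subvalue_mono: "sem_subvalue g S P \<Longrightarrow> P \<subseteq> Q \<Longrightarrow> sem_subvalue g S Q"
  unfolding sem_subvalue_def by (meson game_sem_mono order_trans)

lemma sem_subvalue_root: "sem_subvalue g S P \<Longrightarrow> fml_sem (S (Nd (root g))) \<subseteq> game_sem g P"
  unfolding sem_subvalue_def using root_in_nodes suffix_root by metis

lemma sem_subvalue_subgame:
  assumes "sem_subvalue \<alpha> S P" and "nodes g \<subseteq> nodes \<alpha>"
    and "\<And>b. b \<in> nodes g \<Longrightarrow> game_sem (suffix b \<alpha>) P = game_sem (suffix b g) Q"
  shows "sem_subvalue g S Q"
  using assms unfolding sem_subvalue_def by blast

lemma sem_subvalue_Choice:
  assumes "distinct (labels (Choice a g h))" and "sem_subvalue (Choice a g h) S P"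
  shows "sem_subvalue g S P" and "sem_subvalue h S P"
  by (rule sem_subvalue_subgame[OF assms(2)]; use assms(1) in \<open>auto simp: nodes_def\<close>)+

lemma sem_subvalue_DChoice:
  assumes "distinct (labels (DChoice a g h))" and "sem_subvalue (DChoice a g h) S P"
  shows "sem_subvalue g S P" and "sem_subvalue h S P"
  by (rule sem_subvalue_subgame[OF assms(2)]; use assms(1) in \<open>auto simp: nodes_def\<close>)+

lemma sem_subvalue_Seq:
  assumes "distinct (labels (Seq a g h))" and "sem_subvalue (Seq a g h) S P"
  shows "sem_subvalue g S (game_sem h P)" and "sem_subvalue h S P"
  by (rule sem_subvalue_subgame[OF assms(2)]; use assms(1) in \<open>auto simp: nodes_def\<close>)+

lemma sem_subvalue_Star:
  assumes "distinct (labels (Star a g))" and "sem_subvalue (Star a g) S P"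
  shows "sem_subvalue g S (game_sem (Star a g) P)"
  by (rule sem_subvalue_subgame[OF assms(2)]; use assms(1) in \<open>auto simp: nodes_def\<close>)

lemma sem_subvalue_Cross:
  assumes "distinct (labels (Cross a g))" and "sem_subvalue (Cross a g) S P"
  shows "sem_subvalue g S (game_sem (Cross a g) P)"
  by (rule sem_subvalue_subgame[OF assms(2)]; use assms(1) in \<open>auto simp: nodes_def\<close>)

lemma game_sem_DTest_UNIV: "fml_sem q \<subseteq> P \<Longrightarrow> game_sem (DTest l q) P = UNIV"
  by auto

lemma game_sem_Cross_UNIV:
  assumes "game_sem g UNIV = UNIV"
  shows "game_sem (Cross a g) UNIV = UNIV"
proof -
  have "UNIV \<subseteq> UNIV \<inter> game_sem g UNIV" using assms by simp
  then have "UNIV \<subseteq> game_sem (Cross a g) UNIV"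
    unfolding game_sem.simps(12) by (rule gfp_upperbound)
  then show ?thesis by blast
qed

lemma game_sem_Cross_subset:
  assumes "game_sem g (game_sem (Cross a g) P) \<subseteq> game_sem h (game_sem (Cross a g) P)"
  shows "game_sem (Cross a g) P \<subseteq> game_sem (Cross b h) P"
proof -
  let ?G = "game_sem (Cross a g) P"
  have "mono (\<lambda>Z. P \<inter> game_sem g Z)" by (rule monoI) (use game_sem_mono in blast)
  then have "?G = P \<inter> game_sem g ?G" using gfp_unfold by simp
  with assms have "?G \<subseteq> P \<inter> game_sem h ?G" by blast
  then show ?thesis by (simp add: gfp_upperbound)
qed

lemma game_sem_subset_uproj:
  assumes "distinct (labels \<alpha>)" and "sem_subvalue \<alpha> S P" and "fml_sem (S End) \<subseteq> P"
  shows "game_sem \<alpha> P \<subseteq> game_sem (uproj \<alpha> S) P"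
  using assms
proof (induction \<alpha> arbitrary: S P rule: game.induct[of "\<lambda>_. True"])
  case (AngelAny a x)
  then have "game_sem (DTest (Fresh a 1) (S End)) P = UNIV" by (intro game_sem_DTest_UNIV)
  then show ?case by simp
next
  case (ODE a xs q)
  then have "game_sem (DTest (Fresh a 1) (S End)) P = UNIV" by (intro game_sem_DTest_UNIV)
  then show ?case by simp
next
  case (Choice a g h)
  note subvalue = sem_subvalue_Choice[OF Choice.prems(1,2)]
  have "game_sem g P \<subseteq> game_sem (uproj g S) P" and "game_sem h P \<subseteq> game_sem (uproj h S) P"
    using Choice.IH Choice.prems subvalue by simp_all
  with subvalue[THEN sem_subvalue_root] show ?case by auto
next
  case (DChoice a g h)
  with sem_subvalue_DChoice[OF DChoice.prems(1,2)] show ?case by fastforce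
next
  case (Seq a g h)
  let ?S = "S(End := S (Nd (root h)))" and ?Q = "game_sem (uproj h S) P"
  note subvalue = sem_subvalue_Seq[OF Seq.prems(1,2)]
  have h: "game_sem h P \<subseteq> ?Q" using Seq.IH(2) Seq.prems subvalue(2) by simp
  have "sem_subvalue g ?S ?Q" using sem_subvalue_mono[OF subvalue(1) h] by simp
  moreover have "fml_sem (?S End) \<subseteq> ?Q" using sem_subvalue_root[OF subvalue(2)] h by simp
  ultimately have "game_sem g ?Q \<subseteq> game_sem (uproj g ?S) ?Q" using Seq.IH(1) Seq.prems(1) by simp
  with game_sem_mono[OF h, of g] show ?case by auto
next
  case (Star a g)
  let ?S = "S(End := S (Nd a))"
  let ?body = "Seq (Fresh a 1) (DTest (Fresh a 2) (S (Nd (root g)))) (uproj g ?S)"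
  have subvalue: "sem_subvalue g S UNIV"
    using sem_subvalue_mono[OF sem_subvalue_Star[OF Star.prems(1,2)]] by simp
  then have "game_sem g UNIV \<subseteq> game_sem (uproj g ?S) UNIV" using Star.IH Star.prems(1) by simp
  with sem_subvalue_root[OF subvalue] have "game_sem ?body UNIV = UNIV" by auto
  then have "game_sem (Cross a ?body) UNIV = UNIV" by (rule game_sem_Cross_UNIV)
  moreover have "game_sem (DTest (Fresh a 3) (S End)) P = UNIV"
    using Star.prems(3) by (rule game_sem_DTest_UNIV)
  ultimately have "game_sem (uproj (Star a g) S) P = UNIV"
    by (simp only: uproj.simps game_sem.simps(8))
  then show ?case by (simp only: subset_UNIV)
next
  case (Cross a g)
  let ?S = "S(End := S (Nd a))" and ?G = "game_sem (Cross a g) P"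
  have "sem_subvalue g ?S ?G" using sem_subvalue_Cross[OF Cross.prems(1,2)] by simp
  moreover have "fml_sem (?S End) \<subseteq> ?G" using sem_subvalue_root[OF Cross.prems(2)] by simp
  ultimately have "game_sem g ?G \<subseteq> game_sem (uproj g ?S) ?G" using Cross.IH Cross.prems(1) by simp
  then show ?case unfolding uproj.simps by (rule game_sem_Cross_subset)
qed (simp_all only: uproj.simps order_refl)

theorem mainTheorem8:
  fixes \<alpha> :: game and S :: "key \<Rightarrow> fml" and \<phi> :: fml
  assumes "distinct (labels \<alpha>)"
    and "angelic_subvalue \<alpha> S"
    and "valid (Imp (S End) \<phi>)"
  shows "\<forall>\<omega>. \<omega> \<in> fml_sem (Dia \<alpha> \<phi>) \<longrightarrow> \<omega> \<in> fml_sem (Dia (uproj \<alpha> S) \<phi>)"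
proof -
  have end_phi: "fml_sem (S End) \<subseteq> fml_sem \<phi>"
    using assms(3) by (auto simp: valid_def)
  have "sem_subvalue \<alpha> S (fml_sem (S End))"
    using assms(2) by (simp add: angelic_subvalue_iff_sem_subvalue)
  then have "sem_subvalue \<alpha> S (fml_sem \<phi>)"
    using end_phi by (rule sem_subvalue_mono)
  from assms(1) this end_phi have "game_sem \<alpha> (fml_sem \<phi>) \<subseteq> game_sem (uproj \<alpha> S) (fml_sem \<phi>)"
    by (rule game_sem_subset_uproj)
  then show ?thesis unfolding fml_sem.simps(10) by blast
qed

end
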